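(* Consider an instance of $\mathrm{BAL}(\mu,\nu)$ (heterogeneous setting). Let $\varepsilon>0$ and assume $k\ge 2(\nu-1)/\varepsilon$. If $\mathcal S^{[1]}\subseteq\hat V$ is the set of cardinality $\lfloor k/(\nu-1)\rfloor$ selected in the first iteration of $\textsc{GreedyIter}(\varepsilon,\delta,\mathcal I,\nu,k)$, then with probability at least $1-\delta/\nu$, \[ \Phi^{\ge1}_2(\mathcal I,\mathcal S^{[1]})\ \ge\ \frac{1-\frac1e-\varepsilon}{\nu}\cdot\Phi^{\ge1}(\mathcal I,\mathcal S^*_{\ge1}), \] where $\mathcal S^*_{\ge1}$ is a set of cardinality $k$ maximizing $\Phi^{\ge1}(\mathcal I,\cdot)$.
   Context: Triggering model: for a directed graph $G=(V,E)$ and $p:E\to[0,1]$, an outcome $X=(T_v)_{v\in V}$ is obtained by having each node $v$ independently choose a subset $T_v$ of its in-neighbours $N_v$, with $T_v=S$ with probability $\prod_{u\in S}p_{uv}\prod_{u\in N_v\setminus S}(1-p_{uv})$; $\rho_X(A)$ is the set of nodes reachable from $A\subseteq V$ via arcs $\{(u,v):u\in T_v\}$. $\mathrm{BAL}(\mu,\nu)$ for integer constants $\mu\ge\nu\ge2$: instance = directed graph $G=(V,E)$, probability functions $p_1,\dots,p_\mu:E\to[0,1]$, seed sets $\mathcal I=(I_1,\dots,I_\mu)$, budget $k\ge2$; standing assumptions $\nu\le k\le\nu|V|$, $|V|\ge\mu$. Let $\hat V=V\times[\mu]$; $\mathcal S\subseteq\hat V$ is identified with $(S_1,\dots,S_\mu)$,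 $S_i=\{v:(v,i)\in\mathcal S\}$; unions are componentwise. An outcome profile $\mathcal X=(X_1,\dots,X_\mu)$ consists of independent outcomes, $X_i$ w.r.t. $p_i$. Campaign $i$ reaches $v$ from seeds $A_i$ if $v\in\rho_{X_i}(A_i)$. For a seed sequence $\mathcal R$ and integers $\ell,\beta\ge1$, $\Phi^{\ge\ell}_\beta(\mathcal R,\mathcal S)$ is the expected number of nodes reached by at least $\ell$ campaigns from seeds $\mathcal R$ and by none or at least $\beta$ campaigns from seeds $\mathcal R\cup\mathcal S$. $\Phi^{\ge1}(\mathcal I,\cdot)$ denotes $\Phi^{\ge1}_\nu(\mathcal I,\cdot)$. Subroutine $\mathtt{approx}(f,\mathcal S,\dots,\epsilon,\delta)$: with $T=|V|^2\ln(1/\delta)/\epsilon^2$, draw $T$ independent outcome profiles, compute for each the realized value of the quantity whose expectation defines $f(\mathcal S)$, return the average. Subroutine $\textsc{Greedy}(f,\epsilon,\delta,\cdot,\cdot,m)$: $\delta'=\delta/(m|\hat V|)$, $\epsilon'=\epsilon/(em)$, $\mathcal S=\emptyset$; while $|\mathcal S|\le m$ add an element $v\in\hat V$ maximizing $\mathtt{approx}(f,\mathcal S\cup\{v\},\dots,\epsilon',\delta')$; return $\mathcal S$. Algorithm $\textsc{GreedyIter}(\varepsilon,\delta,\mathcal I,\nu,k)$: $\delta'=\delta/\nu$, $\varepsilon'=\varepsilon/2$, $\mathcal R^{[1]}=\mathcal I$; for $\ell=1,\dots,\nu-1$: $\mathcal S^{[\ell]}=\textsc{Greedy}(\Phi^{\ge\ell}_{\ell+1}(\mathcal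 R^{[\ell]},\cdot),\varepsilon',\delta',\mathcal R^{[\ell]},\ell+1,\lfloor k/(\nu-1)\rfloor)$, $\mathcal R^{[\ell+1]}=\mathcal R^{[\ell]}\cup\mathcal S^{[\ell]}$; return $\bigcup_\ell\mathcal S^{[\ell]}$. *)

theory Defs
  imports "HOL-Probability.Probability"
begin

type_synonym 'v outcome = "'v \<Rightarrow> 'v set"
type_synonym 'v profile = "nat \<Rightarrow> 'v outcome"

definition in_nbrs :: "('v \<times> 'v) set \<Rightarrow> 'v \<Rightarrow> 'v set" where
  "in_nbrs E v = {u. (u, v) \<in> E}"

definition node_pmf :: "('v \<times> 'v) set \<Rightarrow> ('v \<times> 'v \<Rightarrow> real) \<Rightarrow> 'v \<Rightarrow> 'v set pmf" where
  "node_pmf E p v =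
     map_pmf (\<lambda>b. {u \<in> in_nbrs E v. b u})
       (Pi_pmf (in_nbrs E v) False (\<lambda>u. bernoulli_pmf (p (u, v))))"

definition outcome_pmf :: "'v set \<Rightarrow> ('v \<times> 'v) set \<Rightarrow> ('v \<times> 'v \<Rightarrow> real) \<Rightarrow> 'v outcome pmf" where
  "outcome_pmf V E p = Pi_pmf V {} (node_pmf E p)"

definition reach :: "'v outcome \<Rightarrow> 'v set \<Rightarrow> 'v set" where
  "reach X A = {v. \<exists>a\<in>A. (a, v) \<in> {(u, w). u \<in> X w}\<^sup>*}"

definition profile_pmf ::
  "'v set \<Rightarrow> ('v \<times> 'v) set \<Rightarrow> (nat \<Rightarrow> 'v \<times> 'v \<Rightarrow> real) \<Rightarrow> nat \<Rightarrow> 'v profile pmf" where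
  "profile_pmf V E p \<mu> = Pi_pmf {1..\<mu>} (\<lambda>_. {}) (\<lambda>i. outcome_pmf V E (p i))"

(* ---------- Seed sequences as subsets of V x [mu] ---------- *)

definition Vhat :: "'v set \<Rightarrow> nat \<Rightarrow> ('v \<times> nat) set" where
  "Vhat V \<mu> = V \<times> {1..\<mu>}"

definition comp :: "('v \<times> nat) set \<Rightarrow> nat \<Rightarrow> 'v set" where
  "comp S i = {v. (v, i) \<in> S}"

definition reach_count :: "nat \<Rightarrow> 'v profile \<Rightarrow> ('v \<times> nat) set \<Rightarrow> 'v \<Rightarrow> nat" where
  "reach_count \<mu> Xs R v = card {i \<in> {1..\<mu>}. v \<in> reach (Xs i) (comp R i)}"

definition phi_real :: "'v set \<Rightarrow> nat \<Rightarrow> nat \<Rightarrow> nat \<Rightarrow> ('v \<times> nat) set \<Rightarrow> ('v \<times> nat) set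
    \<Rightarrow> 'v profile \<Rightarrow> nat" where
  "phi_real V \<mu> l \<beta> R S Xs =
     card {v \<in> V. l \<le> reach_count \<mu> Xs R v \<and>
                  (reach_count \<mu> Xs (R \<union> S) v = 0 \<or> \<beta> \<le> reach_count \<mu> Xs (R \<union> S) v)}"

definition Phi :: "'v set \<Rightarrow> ('v \<times> 'v) set \<Rightarrow> (nat \<Rightarrow> 'v \<times> 'v \<Rightarrow> real) \<Rightarrow> nat
    \<Rightarrow> nat \<Rightarrow> nat \<Rightarrow> ('v \<times> nat) set \<Rightarrow> ('v \<times> nat) set \<Rightarrow> real" where
  "Phi V E p \<mu> l \<beta> R S =
     measure_pmf.expectation (profile_pmf V E p \<mu>) (\<lambda>Xs. real (phi_real V \<mu> l \<beta> R S Xs))"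

definition num_samples :: "'v set \<Rightarrow> real \<Rightarrow> real \<Rightarrow> nat" where
  "num_samples V \<epsilon> \<delta> = nat \<lceil>real (card V) ^ 2 * ln (1 / \<delta>) / \<epsilon> ^ 2\<rceil>"

definition approx_pmf :: "'v set \<Rightarrow> ('v \<times> 'v) set \<Rightarrow> (nat \<Rightarrow> 'v \<times> 'v \<Rightarrow> real) \<Rightarrow> nat
    \<Rightarrow> ('v profile \<Rightarrow> real) \<Rightarrow> real \<Rightarrow> real \<Rightarrow> real pmf" where
  "approx_pmf V E p \<mu> g \<epsilon> \<delta> =
     (let T = num_samples V \<epsilon> \<delta> in
      map_pmf (\<lambda>xs. (\<Sum>j<T. g (xs j)) / real T)
        (Pi_pmf {..<T} (\<lambda>_ _. {}) (\<lambda>_. profile_pmf V E p \<mu>)))"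

definition greedy_step :: "'v set \<Rightarrow> ('v \<times> 'v) set \<Rightarrow> (nat \<Rightarrow> 'v \<times> 'v \<Rightarrow> real) \<Rightarrow> nat
    \<Rightarrow> (('v \<times> nat) set \<Rightarrow> ('v \<times> nat \<Rightarrow> real) \<Rightarrow> 'v \<times> nat)
    \<Rightarrow> (('v \<times> nat) set \<Rightarrow> 'v profile \<Rightarrow> real) \<Rightarrow> real \<Rightarrow> real
    \<Rightarrow> ('v \<times> nat) set \<Rightarrow> ('v \<times> nat) set pmf" where
  "greedy_step V E p \<mu> tb f \<epsilon>' \<delta>' S =
     map_pmf (\<lambda>vals. S \<union> {tb (Vhat V \<mu> - S) vals})
       (Pi_pmf (Vhat V \<mu> - S) 0 (\<lambda>c. approx_pmf V E p \<mu> (f (S \<union> {c})) \<epsilon>' \<delta>'))"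

primrec greedy_loop :: "'v set \<Rightarrow> ('v \<times> 'v) set \<Rightarrow> (nat \<Rightarrow> 'v \<times> 'v \<Rightarrow> real) \<Rightarrow> nat
    \<Rightarrow> (('v \<times> nat) set \<Rightarrow> ('v \<times> nat \<Rightarrow> real) \<Rightarrow> 'v \<times> nat)
    \<Rightarrow> (('v \<times> nat) set \<Rightarrow> 'v profile \<Rightarrow> real) \<Rightarrow> real \<Rightarrow> real
    \<Rightarrow> nat \<Rightarrow> ('v \<times> nat) set pmf" where
  "greedy_loop V E p \<mu> tb f \<epsilon>' \<delta>' 0 = return_pmf {}"
| "greedy_loop V E p \<mu> tb f \<epsilon>' \<delta>' (Suc n) =
     bind_pmf (greedy_loop V E p \<mu> tb f \<epsilon>' \<delta>' n) (greedy_step V E p \<mu> tb f \<epsilon>' \<delta>')"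

text \<open>Greedy(f, eps, delta, ., ., m): m greedy steps with eps' = eps/(e m),
  delta' = delta/(m |Vhat|); f is given by its realized value.\<close>
definition greedy_pmf :: "'v set \<Rightarrow> ('v \<times> 'v) set \<Rightarrow> (nat \<Rightarrow> 'v \<times> 'v \<Rightarrow> real) \<Rightarrow> nat
    \<Rightarrow> (('v \<times> nat) set \<Rightarrow> ('v \<times> nat \<Rightarrow> real) \<Rightarrow> 'v \<times> nat)
    \<Rightarrow> (('v \<times> nat) set \<Rightarrow> 'v profile \<Rightarrow> real) \<Rightarrow> real \<Rightarrow> real \<Rightarrow> nat
    \<Rightarrow> ('v \<times> nat) set pmf" where
  "greedy_pmf V E p \<mu> tb f \<epsilon> \<delta> m =
     greedy_loop V E p \<mu> tb f (\<epsilon> / (exp 1 * real m)) (\<delta> / (real m * real (card (Vhat V \<mu>)))) m"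

text \<open>Distribution of S^[1], the set selected in the first iteration of
  GreedyIter(eps, delta, I, nu, k): Greedy(Phi^{>=1}_2(I, .), eps/2, delta/nu, I, 2, floor(k/(nu-1))).\<close>
definition greedyiter_first :: "'v set \<Rightarrow> ('v \<times> 'v) set \<Rightarrow> (nat \<Rightarrow> 'v \<times> 'v \<Rightarrow> real) \<Rightarrow> nat
    \<Rightarrow> (('v \<times> nat) set \<Rightarrow> ('v \<times> nat \<Rightarrow> real) \<Rightarrow> 'v \<times> nat)
    \<Rightarrow> real \<Rightarrow> real \<Rightarrow> ('v \<times> nat) set \<Rightarrow> nat \<Rightarrow> nat \<Rightarrow> ('v \<times> nat) set pmf" where
  "greedyiter_first V E p \<mu> tb \<epsilon> \<delta> I \<nu> k =
     greedy_pmf V E p \<mu> tb (\<lambda>S Xs. real (phi_real V \<mu> 1 2 I S Xs))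
       (\<epsilon> / 2) (\<delta> / real \<nu>) (k div (\<nu> - 1))"

end

theory Submission
  imports Defs
begin

(* Fix an outcome profile. The nodes reached by some campaign from I and by at least two campaigns
   from I \<union> S behave like a coverage function of S: a node that gets its second campaign when a
   set R is added to S already gets it when a single element of R is added. Hence
   f = Phi^{>=1}_2(I, .) is monotone and satisfies f (S \<union> R) \<le> f S + \<Sum>x\<in>R. (f (S \<union> {x}) - f S),
   which is all the classical analysis of greedy needs. By Hoeffding's inequality every estimate
   of the sampled greedy algorithm is \<epsilon>'-accurate except with probability 2 \<delta>'^2, so by a union
   bound, with probability at least 1 - \<delta>/\<nu>, each of the m = k div (\<nu> - 1) steps picks an element
   whose gain is within 2 \<epsilon>' of the best one, and then
   f S \<ge> (1 - (1 - 1/k)^m) f Sstar - \<epsilon>/e. The choice of k makes 1 - (1 - 1/k)^m \<ge> (1 - 1/e)(1 - \<epsilon>)/\<nu>,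
   and Phi^{>=1}_\<nu> \<le> Phi^{>=1}_2 pointwise. The additive loss \<epsilon>/e is absorbed as soon as
   Phi^{>=1}_\<nu>(I, Sstar) \<ge> \<nu>; below that threshold a single new seed placed on an existing seed
   already has value at least 1. *)

section \<open>Concentration and union bounds for pmfs\<close>

lemma prob_sample_mean_deviation:
  fixes P :: "'a pmf" and g :: "'a \<Rightarrow> real" and T :: nat
  assumes T: "0 < T" and range: "\<And>x. g x \<in> {0..B}" and B: "0 < B" and \<epsilon>: "0 \<le> \<epsilon>"
  shows "measure_pmf.prob (map_pmf (\<lambda>xs. (\<Sum>j<T. g (xs j)) / real T) (Pi_pmf {..<T} d (\<lambda>_. P)))
           {y. \<epsilon> \<le> \<bar>y - measure_pmf.expectation P g\<bar>} \<le> 2 * exp (-2 * real T * \<epsilon>\<^sup>2 / B\<^sup>2)"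
proof -
  define samples where "samples = Pi_pmf {..<T} d (\<lambda>_. P)"
  have component: "map_pmf (\<lambda>xs. xs j) samples = P" if "j < T" for j
    unfolding samples_def using that by (subst Pi_pmf_component) auto
  have distr_component: "distr (measure_pmf samples) borel (\<lambda>xs. g (xs j)) = distr (measure_pmf P) borel g"
    if "j < T" for j
  proof -
    have "distr (measure_pmf samples) borel (\<lambda>xs. g (xs j))
        = distr (measure_pmf (map_pmf (\<lambda>xs. xs j) samples)) borel g"
      unfolding map_pmf_rep_eq by (subst distr_distr) (auto simp: o_def)
    then show ?thesis using component[OF that] by simp
  qed
  interpret Hoeffding_ineq_iid samples "{..<T}" "\<lambda>j xs. g (xs j)" "\<lambda>xs. g (xs 0)" 0 B
    "measure_pmf.expectation P g"
  proof unfold_locales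
    show "prob_space.indep_vars (measure_pmf samples) (\<lambda>_. borel) (\<lambda>j xs. g (xs j)) {..<T}"
      unfolding samples_def
      by (intro prob_space.indep_vars_compose2[OF _ indep_vars_Pi_pmf])
         (auto simp: measure_pmf.prob_space_axioms)
    have "measure_pmf.expectation samples (\<lambda>xs. g (xs 0))
        = measure_pmf.expectation (map_pmf (\<lambda>xs. xs 0) samples) g"
      by simp
    then show "measure_pmf.expectation P g \<equiv> measure_pmf.expectation samples (\<lambda>xs. g (xs 0))"
      using component T by simp
  qed (use range distr_component T in auto)
  have "{..<T} \<noteq> {}" using T by auto
  then show ?thesis
    using Hoeffding_ineq_abs_ge'[OF \<epsilon> B] by (simp add: samples_def)
qed

lemma prob_Pi_pmf_some_component:
  assumes "finite C" and "\<And>c. c \<in> C \<Longrightarrow> measure_pmf.prob (Q c) (A c) \<le> \<beta>"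
  shows "measure_pmf.prob (Pi_pmf C d Q) {xs. \<exists>c\<in>C. xs c \<in> A c} \<le> real (card C) * \<beta>"
proof -
  have "{xs. \<exists>c\<in>C. xs c \<in> A c} = (\<Union>c\<in>C. (\<lambda>xs. xs c) -` A c)" by auto
  then have "measure_pmf.prob (Pi_pmf C d Q) {xs. \<exists>c\<in>C. xs c \<in> A c}
      \<le> (\<Sum>c\<in>C. measure_pmf.prob (Pi_pmf C d Q) ((\<lambda>xs. xs c) -` A c))"
    using measure_UNION_le[OF \<open>finite C\<close>, of "\<lambda>c. (\<lambda>xs. xs c) -` A c"
        "measure_pmf (Pi_pmf C d Q)"] by simp
  also have "\<dots> = (\<Sum>c\<in>C. measure_pmf.prob (Q c) (A c))"
    by (intro sum.cong refl) (simp flip: measure_map_pmf add: Pi_pmf_component \<open>finite C\<close>)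
  also have "\<dots> \<le> real (card C) * \<beta>"
    using sum_bounded_above[of C "\<lambda>c. measure_pmf.prob (Q c) (A c)" \<beta>] assms(2) by simp
  finally show ?thesis .
qed

lemma prob_bind_pmf_le:
  assumes "0 \<le> c" and "\<And>x. x \<in> set_pmf M \<Longrightarrow> x \<notin> B \<Longrightarrow> measure_pmf.prob (N x) A \<le> c"
  shows "measure_pmf.prob (bind_pmf M N) A \<le> c + measure_pmf.prob M B"
proof -
  have "emeasure (bind_pmf M N) A = (\<integral>\<^sup>+x. emeasure (N x) A \<partial>M)" by simp
  also have "\<dots> \<le> (\<integral>\<^sup>+x. ennreal c + indicator B x \<partial>M)"
  proof (rule nn_integral_mono_AE, rule AE_pmfI)
    fix x assume "x \<in> set_pmf M"
    then show "emeasure (N x) A \<le> ennreal c + indicator B x"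
      using assms(2)[of x] measure_pmf.emeasure_le_1[of "N x" A]
      by (cases "x \<in> B") (auto simp: measure_pmf.emeasure_eq_measure intro: add_increasing ennreal_leI)
  qed
  also have "\<dots> = ennreal c + emeasure M B"
    by (subst nn_integral_add) (auto simp: measure_pmf.emeasure_space_1)
  finally show ?thesis
    using assms(1) by (simp add: measure_pmf.emeasure_eq_measure flip: ennreal_plus)
qed

section \<open>Greedy maximisation with sampled marginal gains\<close>

(* The Nemhauser-Wolsey-Fisher bound after n greedy steps, each of which may miss the best
   marginal gain by \<eta>. *)
definition greedy_guarantee :: "('a set \<Rightarrow> real) \<Rightarrow> 'a set \<Rightarrow> real \<Rightarrow> nat \<Rightarrow> 'a set \<Rightarrow> bool" where
  "greedy_guarantee f W \<eta> n S \<longleftrightarrow>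
     (\<forall>R\<subseteq>W. R \<noteq> {} \<longrightarrow> f R - f S \<le> (1 - 1 / real (card R)) ^ n * f R + real n * \<eta>)"

lemma greedy_guarantee_0: "0 \<le> f {} \<Longrightarrow> greedy_guarantee f W \<eta> 0 {}"
  by (simp add: greedy_guarantee_def)

lemma greedy_guarantee_lower_bound:
  assumes "greedy_guarantee f W \<eta> n S" and "R \<subseteq> W" and "R \<noteq> {}"
  shows "(1 - (1 - 1 / real (card R)) ^ n) * f R - real n * \<eta> \<le> f S"
  using assms unfolding greedy_guarantee_def by (auto simp: algebra_simps)

lemma greedy_guarantee_Suc:
  fixes f :: "'a set \<Rightarrow> real"
  assumes mono: "\<And>A B. f A \<le> f (A \<union> B)"
    and marginal: "\<And>A R. finite R \<Longrightarrow> f (A \<union> R) \<le> f A + (\<Sum>x\<in>R. f (A \<union> {x}) - f A)"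
    and "finite W" and "0 \<le> \<eta>"
    and near_max: "\<And>x. x \<in> W - S \<Longrightarrow> f (S \<union> {x}) \<le> f (S \<union> {c}) + \<eta>"
    and guarantee: "greedy_guarantee f W \<eta> n S"
  shows "greedy_guarantee f W \<eta> (Suc n) (S \<union> {c})"
  unfolding greedy_guarantee_def
proof (intro allI impI)
  fix R assume R: "R \<subseteq> W" "R \<noteq> {}"
  define r where "r = real (card R)"
  define q where "q = 1 - 1 / r"
  define gain where "gain = f (S \<union> {c}) - f S"
  have "finite R" using R \<open>finite W\<close> finite_subset by blast
  then have r: "1 \<le> r" using R by (simp add: r_def Suc_le_eq card_gt_0_iff)
  have q: "0 \<le> q" "q \<le> 1" using r by (auto simp: q_def field_simps)
  have each: "f (S \<union> {x}) - f S \<le> gain + \<eta>" if "x \<in> R" for x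
  proof (cases "x \<in> S")
    case True
    then show ?thesis using mono[of S "{c}"] \<open>0 \<le> \<eta>\<close> by (simp add: gain_def insert_absorb)
  next
    case False
    then have "x \<in> W - S" using that R by auto
    then show ?thesis using near_max by (simp add: gain_def)
  qed
  have "f R \<le> f (S \<union> R)" using mono[of R S] by (simp add: Un_commute)
  also have "\<dots> \<le> f S + (\<Sum>x\<in>R. f (S \<union> {x}) - f S)" by (rule marginal) fact
  also have "\<dots> \<le> f S + r * (gain + \<eta>)"
    using sum_bounded_above[of R "\<lambda>x. f (S \<union> {x}) - f S", OF each] by (simp add: r_def)
  finally have "f R - f S \<le> r * (gain + \<eta>)" by simp
  then have "(1 - q) * (f R - f S) \<le> gain + \<eta>"
    using r by (simp add: q_def field_simps)
  then have "f R - f (S \<union> {c}) \<le> q * (f R - f S) + \<eta>"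
    by (simp add: gain_def algebra_simps)
  also have "\<dots> \<le> q * (q ^ n * f R + real n * \<eta>) + \<eta>"
    using guarantee R q by (intro add_right_mono mult_left_mono) (auto simp: greedy_guarantee_def q_def r_def)
  also have "\<dots> \<le> q ^ Suc n * f R + real (Suc n) * \<eta>"
    using q \<open>0 \<le> \<eta>\<close> mult_left_le_one_le[of "real n * \<eta>" q] by (simp add: algebra_simps)
  finally show "f R - f (S \<union> {c}) \<le> (1 - 1 / real (card R)) ^ Suc n * f R + real (Suc n) * \<eta>"
    by (simp add: q_def r_def)
qed

definition approx_failure_bound :: "'v set \<Rightarrow> real \<Rightarrow> real \<Rightarrow> real" where
  "approx_failure_bound V \<epsilon> \<delta> =
     2 * exp (-2 * real (num_samples V \<epsilon> \<delta>) * \<epsilon>\<^sup>2 / (real (card V))\<^sup>2)"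

lemma num_samples_pos_and_failure_bound:
  assumes "finite V" and "V \<noteq> {}" and "0 < \<epsilon>" and "0 < \<delta>" and "\<delta> < 1"
  shows "0 < num_samples V \<epsilon> \<delta>" and "approx_failure_bound V \<epsilon> \<delta> \<le> 2 * \<delta>\<^sup>2"
proof -
  define T where "T = num_samples V \<epsilon> \<delta>"
  have V: "0 < real (card V)" using assms(1,2) by (simp add: card_gt_0_iff)
  have ln: "0 < ln (1 / \<delta>)" using assms(4,5) by simp
  have T: "(real (card V))\<^sup>2 * ln (1 / \<delta>) / \<epsilon>\<^sup>2 \<le> real T"
    unfolding T_def num_samples_def by linarith
  moreover have "0 < (real (card V))\<^sup>2 * ln (1 / \<delta>) / \<epsilon>\<^sup>2" using V ln assms(3) by simp
  ultimately show "0 < num_samples V \<epsilon> \<delta>" by (simp add: T_def)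
  have "2 * ln (1 / \<delta>) \<le> 2 * real T * \<epsilon>\<^sup>2 / (real (card V))\<^sup>2"
    using T V assms(3) by (simp add: field_simps)
  then have "exp (-2 * real T * \<epsilon>\<^sup>2 / (real (card V))\<^sup>2) \<le> exp (- (2 * ln (1 / \<delta>)))" by simp
  also have "\<dots> = exp (ln \<delta> + ln \<delta>)"
    using assms(4) by (simp add: ln_div)
  also have "\<dots> = \<delta>\<^sup>2"
    by (simp only: exp_add exp_ln[OF assms(4)] power2_eq_square)
  finally show "approx_failure_bound V \<epsilon> \<delta> \<le> 2 * \<delta>\<^sup>2"
    by (simp add: approx_failure_bound_def T_def)
qed

context
  fixes V :: "'v set" and E :: "('v \<times> 'v) set" and p :: "nat \<Rightarrow> 'v \<times> 'v \<Rightarrow> real" and \<mu> :: nat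
    and tb :: "('v \<times> nat) set \<Rightarrow> ('v \<times> nat \<Rightarrow> real) \<Rightarrow> 'v \<times> nat"
    and g :: "('v \<times> nat) set \<Rightarrow> 'v profile \<Rightarrow> real" and f :: "('v \<times> nat) set \<Rightarrow> real"
  assumes finite_V: "finite V" and V_nonempty: "V \<noteq> {}"
    and tb_max: "\<forall>C h. finite C \<and> C \<noteq> {} \<longrightarrow> tb C h \<in> C \<and> (\<forall>c\<in>C. h c \<le> h (tb C h))"
    and g_range: "\<And>S Xs. g S Xs \<in> {0..real (card V)}"
    and f_eq: "\<And>S. f S = measure_pmf.expectation (profile_pmf V E p \<mu>) (g S)"
    and f_mono: "\<And>A B. f A \<le> f (A \<union> B)"
    and f_marginal: "\<And>A R. finite R \<Longrightarrow> f (A \<union> R) \<le> f A + (\<Sum>x\<in>R. f (A \<union> {x}) - f A)"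
begin

lemma prob_greedy_step_breaks_guarantee:
  assumes "0 < \<epsilon>" and "0 < num_samples V \<epsilon> \<delta>"
    and guarantee: "greedy_guarantee f (Vhat V \<mu>) (2 * \<epsilon>) n S"
  shows "measure_pmf.prob (greedy_step V E p \<mu> tb g \<epsilon> \<delta> S)
           {S'. \<not> greedy_guarantee f (Vhat V \<mu>) (2 * \<epsilon>) (Suc n) S'}
         \<le> real (card (Vhat V \<mu>)) * approx_failure_bound V \<epsilon> \<delta>"
proof -
  define C where "C = Vhat V \<mu> - S"
  define Q where "Q c = approx_pmf V E p \<mu> (g (S \<union> {c})) \<epsilon> \<delta>" for c
  define Inaccurate where "Inaccurate c = {y. \<epsilon> \<le> \<bar>y - f (S \<union> {c})\<bar>}" for c
  have finite_Vhat: "finite (Vhat V \<mu>)" using finite_V by (simp add: Vhat_def)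
  then have "finite C" by (simp add: C_def)
  have accurate_choice_keeps_guarantee:
    "greedy_guarantee f (Vhat V \<mu>) (2 * \<epsilon>) (Suc n) (S \<union> {tb C est})"
    if accurate: "\<forall>c\<in>C. est c \<notin> Inaccurate c" for est
  proof (rule greedy_guarantee_Suc[OF f_mono f_marginal finite_Vhat _ _ guarantee])
    show "0 \<le> 2 * \<epsilon>" using assms(1) by simp
  next
    fix x assume "x \<in> Vhat V \<mu> - S"
    then have "x \<in> C" by (simp add: C_def)
    then have "tb C est \<in> C" "est x \<le> est (tb C est)"
      using tb_max \<open>finite C\<close> by auto
    moreover have "\<bar>est x - f (S \<union> {x})\<bar> < \<epsilon>"
      and "\<bar>est (tb C est) - f (S \<union> {tb C est})\<bar> < \<epsilon>"
      using accurate \<open>x \<in> C\<close> \<open>tb C est \<in> C\<close> by (auto simp: Inaccurate_def not_le)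
    ultimately show "f (S \<union> {x}) \<le> f (S \<union> {tb C est}) + 2 * \<epsilon>" by linarith
  qed
  have estimate_fails: "measure_pmf.prob (Q c) (Inaccurate c) \<le> approx_failure_bound V \<epsilon> \<delta>" for c
  proof -
    have "0 < real (card V)" using finite_V V_nonempty by (simp add: card_gt_0_iff)
    then show ?thesis
      unfolding Q_def approx_pmf_def Let_def Inaccurate_def f_eq approx_failure_bound_def
      using prob_sample_mean_deviation[OF assms(2), where g = "g (S \<union> {c})" and B = "real (card V)"]
        g_range \<open>0 < \<epsilon>\<close> by simp
  qed
  have "measure_pmf.prob (greedy_step V E p \<mu> tb g \<epsilon> \<delta> S)
          {S'. \<not> greedy_guarantee f (Vhat V \<mu>) (2 * \<epsilon>) (Suc n) S'}
      \<le> measure_pmf.prob (Pi_pmf C 0 Q) {est. \<exists>c\<in>C. est c \<in> Inaccurate c}"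
    unfolding greedy_step_def C_def[symmetric] Q_def[symmetric] measure_map_pmf
    using accurate_choice_keeps_guarantee by (intro measure_pmf.finite_measure_mono) auto
  also have "\<dots> \<le> real (card C) * approx_failure_bound V \<epsilon> \<delta>"
    using prob_Pi_pmf_some_component[OF \<open>finite C\<close> estimate_fails] .
  also have "\<dots> \<le> real (card (Vhat V \<mu>)) * approx_failure_bound V \<epsilon> \<delta>"
    using finite_Vhat by (intro mult_right_mono) (auto simp: C_def card_mono approx_failure_bound_def)
  finally show ?thesis .
qed

lemma prob_greedy_loop_breaks_guarantee:
  assumes "0 < \<epsilon>" and "0 < num_samples V \<epsilon> \<delta>"
  shows "measure_pmf.prob (greedy_loop V E p \<mu> tb g \<epsilon> \<delta> n)
           {S. \<not> greedy_guarantee f (Vhat V \<mu>) (2 * \<epsilon>) n S}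
         \<le> real n * (real (card (Vhat V \<mu>)) * approx_failure_bound V \<epsilon> \<delta>)"
proof (induction n)
  case 0
  have "0 \<le> f {}" using g_range by (simp add: f_eq)
  then show ?case by (simp add: greedy_guarantee_0)
next
  case (Suc n)
  let ?b = "real (card (Vhat V \<mu>)) * approx_failure_bound V \<epsilon> \<delta>"
  have "0 \<le> ?b" by (simp add: approx_failure_bound_def)
  have "measure_pmf.prob (greedy_loop V E p \<mu> tb g \<epsilon> \<delta> (Suc n))
          {S. \<not> greedy_guarantee f (Vhat V \<mu>) (2 * \<epsilon>) (Suc n) S}
      \<le> ?b + measure_pmf.prob (greedy_loop V E p \<mu> tb g \<epsilon> \<delta> n)
               {S. \<not> greedy_guarantee f (Vhat V \<mu>) (2 * \<epsilon>) n S}"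
    unfolding greedy_loop.simps
    by (rule prob_bind_pmf_le[OF \<open>0 \<le> ?b\<close>]) (simp add: prob_greedy_step_breaks_guarantee[OF assms])
  also have "\<dots> \<le> real (Suc n) * ?b" using Suc.IH by (simp add: algebra_simps)
  finally show ?case .
qed

lemma prob_greedy_pmf_guarantee:
  assumes "1 \<le> \<mu>" and "0 < \<epsilon>" and "0 < \<delta>" and "\<delta> \<le> 1 / 2" and "1 \<le> m"
  shows "1 - \<delta> \<le> measure_pmf.prob (greedy_pmf V E p \<mu> tb g \<epsilon> \<delta> m)
           {S. greedy_guarantee f (Vhat V \<mu>) (2 * (\<epsilon> / (exp 1 * real m))) m S}"
proof -
  define n where "n = real (card (Vhat V \<mu>))"
  define \<epsilon>' where "\<epsilon>' = \<epsilon> / (exp 1 * real m)"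
  define \<delta>' where "\<delta>' = \<delta> / (real m * n)"
  define Good where "Good = {S. greedy_guarantee f (Vhat V \<mu>) (2 * \<epsilon>') m S}"
  let ?P = "greedy_pmf V E p \<mu> tb g \<epsilon> \<delta> m"
  have "1 \<le> card V" using finite_V V_nonempty by (simp add: Suc_le_eq card_gt_0_iff)
  then have "1 \<le> card (Vhat V \<mu>)" using \<open>1 \<le> \<mu>\<close> by (simp add: Vhat_def card_cartesian_product)
  then have "1 \<le> n" by (simp add: n_def)
  then have mn: "1 \<le> real m * n" using \<open>1 \<le> m\<close> mult_mono[of 1 "real m" 1 n] by simp
  have "0 < \<epsilon>'" using \<open>0 < \<epsilon>\<close> \<open>1 \<le> m\<close> by (simp add: \<epsilon>'_def)
  have "0 < \<delta>'" and "\<delta>' \<le> \<delta>" using mn \<open>0 < \<delta>\<close> by (simp_all add: \<delta>'_def field_simps)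
  then have "\<delta>' < 1" and "2 * \<delta>' \<le> 1" using \<open>\<delta> \<le> 1 / 2\<close> by linarith+
  note samples = num_samples_pos_and_failure_bound[OF finite_V V_nonempty \<open>0 < \<epsilon>'\<close> \<open>0 < \<delta>'\<close> \<open>\<delta>' < 1\<close>]
  have "- Good = {S. \<not> greedy_guarantee f (Vhat V \<mu>) (2 * \<epsilon>') m S}" by (auto simp: Good_def)
  then have "measure_pmf.prob ?P (- Good) \<le> real m * (n * approx_failure_bound V \<epsilon>' \<delta>')"
    using prob_greedy_loop_breaks_guarantee[OF \<open>0 < \<epsilon>'\<close> samples(1)]
    by (simp add: greedy_pmf_def \<epsilon>'_def \<delta>'_def n_def)
  also have "\<dots> \<le> real m * (n * (2 * \<delta>'\<^sup>2))"
    using samples \<open>1 \<le> n\<close> by (intro mult_left_mono) auto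
  also have "\<dots> = 2 * \<delta>' * \<delta>"
    using mn by (simp add: \<delta>'_def power2_eq_square field_simps)
  also have "\<dots> \<le> \<delta>"
    using \<open>2 * \<delta>' \<le> 1\<close> \<open>0 < \<delta>'\<close> \<open>0 < \<delta>\<close> by (intro mult_left_le_one_le) auto
  finally show ?thesis
    using measure_pmf.prob_compl[of Good ?P] by (simp add: Good_def \<epsilon>'_def Compl_eq_Diff_UNIV)
qed

end

section \<open>Coverage structure of the two-campaign objective\<close>

lemma card_marginal_le:
  fixes N :: "'a set \<Rightarrow> 'b set"
  assumes "finite U" and "\<And>T. N T \<subseteq> U" and "finite R"
    and mono: "\<And>T. N S \<subseteq> N (S \<union> T)"
    and cover: "N (S \<union> R) \<subseteq> N S \<union> (\<Union>x\<in>R. N (S \<union> {x}))"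
  shows "real (card (N (S \<union> R)))
           \<le> real (card (N S)) + (\<Sum>x\<in>R. real (card (N (S \<union> {x}))) - real (card (N S)))"
proof -
  have finite_N: "finite (N T)" for T using assms(1,2) finite_subset by blast
  have "N (S \<union> R) \<subseteq> N S \<union> (\<Union>x\<in>R. N (S \<union> {x}) - N S)" using cover by blast
  then have "card (N (S \<union> R)) \<le> card (N S \<union> (\<Union>x\<in>R. N (S \<union> {x}) - N S))"
    by (rule card_mono[rotated]) (use finite_N \<open>finite R\<close> in auto)
  also have "\<dots> \<le> card (N S) + (\<Sum>x\<in>R. card (N (S \<union> {x}) - N S))"
    using card_Un_le card_UN_le[OF \<open>finite R\<close>] add_left_mono order_trans by blast
  finally have "real (card (N (S \<union> R))) \<le> real (card (N S)) + (\<Sum>x\<in>R. real (card (N (S \<union> {x}) - N S)))"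
    by (metis of_nat_add of_nat_le_iff of_nat_sum)
  moreover have "real (card (N (S \<union> {x}) - N S)) = real (card (N (S \<union> {x}))) - real (card (N S))" for x
  proof -
    have "card (N (S \<union> {x}) - N S) = card (N (S \<union> {x})) - card (N S)"
      and "card (N S) \<le> card (N (S \<union> {x}))"
      by (rule card_Diff_subset[OF finite_N mono], rule card_mono[OF finite_N mono])
    then show ?thesis by (simp only: of_nat_diff)
  qed
  ultimately show ?thesis by simp
qed

lemma expectation_marginal_le:
  fixes M :: "'b pmf" and h :: "'a set \<Rightarrow> 'b \<Rightarrow> real"
  assumes integrable: "\<And>T. integrable (measure_pmf M) (h T)" and "finite R"
    and marginal: "\<And>\<omega>. h (S \<union> R) \<omega> \<le> h S \<omega> + (\<Sum>x\<in>R. h (S \<union> {x}) \<omega> - h S \<omega>)"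
  shows "measure_pmf.expectation M (h (S \<union> R))
           \<le> measure_pmf.expectation M (h S)
              + (\<Sum>x\<in>R. measure_pmf.expectation M (h (S \<union> {x})) - measure_pmf.expectation M (h S))"
proof -
  have "measure_pmf.expectation M (h (S \<union> R))
      \<le> measure_pmf.expectation M (\<lambda>\<omega>. h S \<omega> + (\<Sum>x\<in>R. h (S \<union> {x}) \<omega> - h S \<omega>))"
    by (intro integral_mono marginal integrable Bochner_Integration.integrable_add
        Bochner_Integration.integrable_sum Bochner_Integration.integrable_diff)
  also have "\<dots> = measure_pmf.expectation M (h S)
              + (\<Sum>x\<in>R. measure_pmf.expectation M (h (S \<union> {x})) - measure_pmf.expectation M (h S))"
    using integrable by (simp add: Bochner_Integration.integral_sum Bochner_Integration.integrable_diff)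
  finally show ?thesis .
qed

definition campaigns_reaching :: "nat \<Rightarrow> 'v profile \<Rightarrow> ('v \<times> nat) set \<Rightarrow> 'v \<Rightarrow> nat set" where
  "campaigns_reaching \<mu> Xs R v = {i \<in> {1..\<mu>}. v \<in> reach (Xs i) (Defs.comp R i)}"

lemma reach_count_eq_card: "reach_count \<mu> Xs R v = card (campaigns_reaching \<mu> Xs R v)"
  by (simp add: reach_count_def campaigns_reaching_def)

lemma finite_campaigns_reaching [simp]: "finite (campaigns_reaching \<mu> Xs R v)"
  by (simp add: campaigns_reaching_def)

lemma campaigns_reaching_Un:
  "campaigns_reaching \<mu> Xs (A \<union> B) v = campaigns_reaching \<mu> Xs A v \<union> campaigns_reaching \<mu> Xs B v"
proof -
  have "Defs.comp (A \<union> B) i = Defs.comp A i \<union> Defs.comp B i" for i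
    by (auto simp: Defs.comp_def)
  moreover have "reach X (A' \<union> B') = reach X A' \<union> reach X B'" for X and A' B' :: "'a set"
    unfolding reach_def by blast
  ultimately show ?thesis unfolding campaigns_reaching_def by auto
qed

lemma campaigns_reaching_mono: "A \<subseteq> B \<Longrightarrow> campaigns_reaching \<mu> Xs A v \<subseteq> campaigns_reaching \<mu> Xs B v"
  by (metis campaigns_reaching_Un sup.order_iff)

lemma campaigns_reaching_singleton:
  "i \<in> campaigns_reaching \<mu> Xs R v \<Longrightarrow> \<exists>x\<in>R. i \<in> campaigns_reaching \<mu> Xs {x} v"
  unfolding campaigns_reaching_def reach_def Defs.comp_def by blast

lemma campaigns_reaching_seed: "(v, i) \<in> R \<Longrightarrow> i \<in> {1..\<mu>} \<Longrightarrow> i \<in> campaigns_reaching \<mu> Xs R v"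
  unfolding campaigns_reaching_def reach_def Defs.comp_def by blast

lemma reach_count_mono: "A \<subseteq> B \<Longrightarrow> reach_count \<mu> Xs A v \<le> reach_count \<mu> Xs B v"
  unfolding reach_count_eq_card by (intro card_mono campaigns_reaching_mono) auto

definition doubly_reached :: "'v set \<Rightarrow> nat \<Rightarrow> ('v \<times> nat) set \<Rightarrow> ('v \<times> nat) set \<Rightarrow> 'v profile \<Rightarrow> 'v set" where
  "doubly_reached V \<mu> I S Xs = {v \<in> V. 1 \<le> reach_count \<mu> Xs I v \<and> 2 \<le> reach_count \<mu> Xs (I \<union> S) v}"

lemma phi_real_1_2_eq_card: "phi_real V \<mu> 1 2 I S Xs = card (doubly_reached V \<mu> I S Xs)"
proof -
  have "reach_count \<mu> Xs I v \<le> reach_count \<mu> Xs (I \<union> S) v" for v by (rule reach_count_mono) auto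
  then show ?thesis unfolding phi_real_def doubly_reached_def by (metis (lifting) le_zero_eq not_one_le_zero)
qed

lemma finite_doubly_reached: "finite V \<Longrightarrow> finite (doubly_reached V \<mu> I S Xs)"
  by (simp add: doubly_reached_def)

lemma doubly_reached_mono: "doubly_reached V \<mu> I S Xs \<subseteq> doubly_reached V \<mu> I (S \<union> T) Xs"
  unfolding doubly_reached_def using reach_count_mono[of "I \<union> S" "I \<union> (S \<union> T)" \<mu> Xs]
  by (auto intro: order_trans)

lemma doubly_reached_cover:
  "doubly_reached V \<mu> I (S \<union> R) Xs
     \<subseteq> doubly_reached V \<mu> I S Xs \<union> (\<Union>x\<in>R. doubly_reached V \<mu> I (S \<union> {x}) Xs)"
proof
  fix v assume v: "v \<in> doubly_reached V \<mu> I (S \<union> R) Xs"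
  let ?C = "\<lambda>A. campaigns_reaching \<mu> Xs A v"
  show "v \<in> doubly_reached V \<mu> I S Xs \<union> (\<Union>x\<in>R. doubly_reached V \<mu> I (S \<union> {x}) Xs)"
  proof (cases "v \<in> doubly_reached V \<mu> I S Xs")
    case False
    have "1 \<le> card (?C I)"
      using v by (simp add: doubly_reached_def reach_count_eq_card)
    moreover have "card (?C I) \<le> card (?C (I \<union> S))"
      by (intro card_mono campaigns_reaching_mono) auto
    ultimately have "card (?C (I \<union> S)) = 1"
      using v False by (simp add: doubly_reached_def reach_count_eq_card)
    then obtain i where i: "?C (I \<union> S) = {i}" by (rule card_1_singletonE)
    have split: "?C (I \<union> (S \<union> A)) = ?C (I \<union> S) \<union> ?C A" for A
      by (simp only: campaigns_reaching_Un Un_assoc)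
    have "\<not> ?C (I \<union> (S \<union> R)) \<subseteq> {i}"
    proof
      assume "?C (I \<union> (S \<union> R)) \<subseteq> {i}"
      then have "card (?C (I \<union> (S \<union> R))) \<le> 1" using card_mono[of "{i}"] by fastforce
      with v show False by (simp add: doubly_reached_def reach_count_eq_card)
    qed
    then obtain j where j: "j \<in> ?C R" "j \<noteq> i" using split[of R] i by blast
    obtain x where "x \<in> R" "j \<in> ?C {x}" using campaigns_reaching_singleton[OF j(1)] ..
    then have "{i, j} \<subseteq> ?C (I \<union> (S \<union> {x}))" using split[of "{x}"] i by blast
    then have "card {i, j} \<le> card (?C (I \<union> (S \<union> {x})))"
      by (rule card_mono[OF finite_campaigns_reaching])
    then have "2 \<le> card (?C (I \<union> (S \<union> {x})))" using j(2) by simp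
    then have "v \<in> doubly_reached V \<mu> I (S \<union> {x}) Xs"
      using v by (simp add: doubly_reached_def reach_count_eq_card)
    then show ?thesis using \<open>x \<in> R\<close> by blast
  qed simp
qed

lemma phi_real_le_card: "finite V \<Longrightarrow> phi_real V \<mu> l \<beta> R S Xs \<le> card V"
  unfolding phi_real_def by (rule card_mono) auto

lemma integrable_phi_real:
  "finite V \<Longrightarrow> integrable (measure_pmf M) (\<lambda>Xs. real (phi_real V \<mu> l \<beta> R S Xs))"
  by (rule measure_pmf.integrable_const_bound[where B = "real (card V)"]) (auto simp: phi_real_le_card)

lemma Phi_nonneg: "0 \<le> Phi V E p \<mu> l \<beta> R S"
  unfolding Phi_def by simp

lemma Phi_1_2_mono:
  assumes "finite V"
  shows "Phi V E p \<mu> 1 2 I S \<le> Phi V E p \<mu> 1 2 I (S \<union> T)"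
  unfolding Phi_def
proof (rule integral_mono[OF integrable_phi_real[OF assms] integrable_phi_real[OF assms]])
  fix Xs
  show "real (phi_real V \<mu> 1 2 I S Xs) \<le> real (phi_real V \<mu> 1 2 I (S \<union> T) Xs)"
    unfolding phi_real_1_2_eq_card
    by (intro of_nat_mono card_mono finite_doubly_reached assms doubly_reached_mono)
qed

lemma Phi_1_2_marginal:
  assumes "finite V" and "finite R"
  shows "Phi V E p \<mu> 1 2 I (S \<union> R)
           \<le> Phi V E p \<mu> 1 2 I S + (\<Sum>x\<in>R. Phi V E p \<mu> 1 2 I (S \<union> {x}) - Phi V E p \<mu> 1 2 I S)"
  unfolding Phi_def
proof (rule expectation_marginal_le[OF integrable_phi_real[OF assms(1)] assms(2)])
  fix Xs
  show "real (phi_real V \<mu> 1 2 I (S \<union> R) Xs) \<le> real (phi_real V \<mu> 1 2 I S Xs)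
      + (\<Sum>x\<in>R. real (phi_real V \<mu> 1 2 I (S \<union> {x}) Xs) - real (phi_real V \<mu> 1 2 I S Xs))"
    unfolding phi_real_1_2_eq_card
    by (rule card_marginal_le[OF assms(1) _ assms(2) doubly_reached_mono doubly_reached_cover])
       (auto simp: doubly_reached_def)
qed

lemma Phi_le_Phi_1_2:
  assumes "finite V" and "2 \<le> \<nu>"
  shows "Phi V E p \<mu> 1 \<nu> I S \<le> Phi V E p \<mu> 1 2 I S"
  unfolding Phi_def
proof (intro integral_mono integrable_phi_real \<open>finite V\<close>)
  fix Xs
  show "real (phi_real V \<mu> 1 \<nu> I S Xs) \<le> real (phi_real V \<mu> 1 2 I S Xs)"
    unfolding phi_real_def using \<open>finite V\<close> \<open>2 \<le> \<nu>\<close> by (intro of_nat_mono card_mono) auto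
qed

lemma Phi_no_seeds: "0 < l \<Longrightarrow> Phi V E p \<mu> l \<beta> {} S = 0"
  by (simp add: Phi_def phi_real_def reach_count_def reach_def Defs.comp_def)

lemma Phi_1_2_singleton_ge_1:
  assumes "finite V" and "a \<in> V" and "(a, i) \<in> I" and "i \<in> {1..\<mu>}" and "j \<in> {1..\<mu>}" and "j \<noteq> i"
  shows "1 \<le> Phi V E p \<mu> 1 2 I {(a, j)}"
proof -
  have "a \<in> doubly_reached V \<mu> I {(a, j)} Xs" for Xs
  proof -
    have "i \<in> campaigns_reaching \<mu> Xs I a" "{i, j} \<subseteq> campaigns_reaching \<mu> Xs (I \<union> {(a, j)}) a"
      using assms by (auto intro: campaigns_reaching_seed)
    then have "1 \<le> reach_count \<mu> Xs I a" "2 \<le> reach_count \<mu> Xs (I \<union> {(a, j)}) a"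
      using card_mono[of "campaigns_reaching \<mu> Xs (I \<union> {(a, j)}) a" "{i, j}"] \<open>j \<noteq> i\<close>
      by (auto simp: reach_count_eq_card Suc_le_eq card_gt_0_iff)
    then show ?thesis using \<open>a \<in> V\<close> by (simp add: doubly_reached_def)
  qed
  then have "0 < card (doubly_reached V \<mu> I {(a, j)} Xs)" for Xs
    using finite_doubly_reached[OF \<open>finite V\<close>] card_gt_0_iff by blast
  then have "1 \<le> real (phi_real V \<mu> 1 2 I {(a, j)} Xs)" for Xs
    unfolding phi_real_1_2_eq_card by (simp add: Suc_le_eq)
  then have "measure_pmf.expectation (profile_pmf V E p \<mu>) (\<lambda>_. 1::real)
      \<le> Phi V E p \<mu> 1 2 I {(a, j)}"
    unfolding Phi_def by (intro integral_mono integrable_phi_real \<open>finite V\<close>) auto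
  then show ?thesis by simp
qed

section \<open>Choice of the budget\<close>

lemma exp_neg_le_chord:
  fixes x :: real
  assumes "0 \<le> x" and "x \<le> 1"
  shows "exp (- x) \<le> 1 - (1 - 1 / exp 1) * x"
proof -
  have "convex_on UNIV exp"
    by (intro convex_on_realI[where f' = exp]) (auto intro!: derivative_eq_intros)
  then have "exp ((1 - x) *\<^sub>R 0 + x *\<^sub>R (- 1)) \<le> (1 - x) * exp 0 + x * exp (- 1)"
    by (rule convex_onD) (use assms in auto)
  then show ?thesis by (simp add: exp_minus field_simps)
qed

lemma one_minus_inverse_power_le_exp:
  fixes k m :: nat
  assumes "0 < k"
  shows "(1 - 1 / real k) ^ m \<le> exp (- (real m / real k))"
proof -
  have "(1 - 1 / real k) ^ m \<le> exp (- (1 / real k)) ^ m"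
    using assms exp_ge_add_one_self[of "- (1 / real k)"] by (intro power_mono) (auto simp: field_simps)
  also have "\<dots> = exp (- (real m / real k))"
    by (simp flip: exp_of_nat_mult)
  finally show ?thesis .
qed

context
  fixes k \<nu> :: nat and \<epsilon> :: real
  assumes \<nu>: "2 \<le> \<nu>" and \<epsilon>: "0 < \<epsilon>" "\<epsilon> < 1" and k: "2 * (real \<nu> - 1) / \<epsilon> \<le> real k"
begin

lemma budget_exceeds: "2 * (real \<nu> - 1) < real k"
proof -
  have "2 * (real \<nu> - 1) * 1 < 2 * (real \<nu> - 1) * (1 / \<epsilon>)"
    using \<nu> \<epsilon> by (intro mult_strict_left_mono) (auto simp: field_simps)
  then show ?thesis using k by simp
qed

lemma one_le_budget_div: "1 \<le> k div (\<nu> - 1)"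
  using budget_exceeds \<nu> by (simp add: div_greater_zero_iff Suc_le_eq of_nat_diff)

lemma budget_div_ratio_ge: "(1 - \<epsilon>) / real \<nu> \<le> real (k div (\<nu> - 1)) / real k"
proof -
  define d where "d = real \<nu> - 1"
  define m where "m = k div (\<nu> - 1)"
  have d: "1 \<le> d" "real (\<nu> - 1) = d" using \<nu> by (auto simp: d_def of_nat_diff)
  have kpos: "0 < real k" using budget_exceeds d by (simp add: d_def)
  have "real k = real m * d + real (k mod (\<nu> - 1))"
    unfolding m_def d(2)[symmetric] by (metis div_mult_mod_eq of_nat_add of_nat_mult)
  moreover have "k mod (\<nu> - 1) < \<nu> - 1" using \<nu> by simp
  then have "real (k mod (\<nu> - 1)) < d" unfolding d(2)[symmetric] by (simp only: of_nat_less_iff)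
  ultimately have "real k / d - 1 < real m"
    using d by (simp add: field_simps)
  then have "(real k / d - 1) / real k < real m / real k"
    using kpos by (rule divide_strict_right_mono)
  moreover have "(real k / d - 1) / real k = 1 / d - 1 / real k"
    using kpos d by (simp add: field_simps)
  ultimately have "1 / d - 1 / real k < real m / real k" by simp
  moreover have "1 / real k \<le> \<epsilon> / (2 * d)"
    using k \<epsilon> d kpos by (simp add: d_def field_simps)
  moreover have "(1 - \<epsilon>) / real \<nu> \<le> (1 - \<epsilon>) / d"
    using d \<epsilon> by (intro divide_left_mono) (auto simp: d_def)
  moreover have "(1 - \<epsilon>) / d \<le> 1 / d - \<epsilon> / (2 * d)"
    using d \<epsilon> by (simp add: field_simps)
  ultimately show ?thesis by (simp add: m_def)
qed

lemma greedy_coverage_factor: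
  "(1 - 1 / exp 1) * (1 - \<epsilon>) / real \<nu> \<le> 1 - (1 - 1 / real k) ^ (k div (\<nu> - 1))"
proof -
  define x where "x = real (k div (\<nu> - 1)) / real k"
  have kpos: "0 < k" using budget_exceeds \<nu> by simp
  have "x \<le> 1" "0 \<le> x"
    using kpos by (auto simp: x_def field_simps div_le_dividend)
  have "(1 - 1 / exp 1) * (1 - \<epsilon>) / real \<nu> \<le> (1 - 1 / exp 1) * x"
    using budget_div_ratio_ge by (simp add: x_def mult_left_mono times_divide_eq_right[symmetric] del: times_divide_eq_right)
  also have "\<dots> \<le> 1 - exp (- x)"
    using exp_neg_le_chord[OF \<open>0 \<le> x\<close> \<open>x \<le> 1\<close>] by simp
  also have "\<dots> \<le> 1 - (1 - 1 / real k) ^ (k div (\<nu> - 1))"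
    using one_minus_inverse_power_le_exp[OF kpos] by (simp add: x_def)
  finally show ?thesis .
qed

lemma greedy_guarantee_budget_bound:
  fixes f :: "'a set \<Rightarrow> real"
  assumes "greedy_guarantee f W \<eta> (k div (\<nu> - 1)) S" and "R \<subseteq> W" and "card R = k" and "0 \<le> f R"
  shows "(1 - 1 / exp 1) * (1 - \<epsilon>) / real \<nu> * f R - real (k div (\<nu> - 1)) * \<eta> \<le> f S"
proof -
  have "R \<noteq> {}" using \<open>card R = k\<close> budget_exceeds \<nu> by auto
  have "(1 - 1 / exp 1) * (1 - \<epsilon>) / real \<nu> * f R \<le> (1 - (1 - 1 / real k) ^ (k div (\<nu> - 1))) * f R"
    using greedy_coverage_factor \<open>0 \<le> f R\<close> by (rule mult_right_mono)
  then show ?thesis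
    using greedy_guarantee_lower_bound[OF assms(1,2) \<open>R \<noteq> {}\<close>] unfolding \<open>card R = k\<close> by linarith
qed

end

section \<open>The first iteration of GreedyIter\<close>

lemma greedy_guarantee_Phi_1_2_ge:
  assumes "finite V" and "I \<subseteq> Vhat V \<mu>" and "I \<noteq> {}" and "2 \<le> \<mu>" and "0 < m"
    and guarantee: "greedy_guarantee (Phi V E p \<mu> 1 2 I) (Vhat V \<mu>) \<eta> m S"
  shows "1 - real m * \<eta> \<le> Phi V E p \<mu> 1 2 I S"
proof -
  obtain a i where ai: "(a, i) \<in> I" using \<open>I \<noteq> {}\<close> by auto
  then have "a \<in> V" "i \<in> {1..\<mu>}" using \<open>I \<subseteq> Vhat V \<mu>\<close> by (auto simp: Vhat_def)
  define j where "j = (if i = 1 then 2 else 1 :: nat)"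
  have j: "j \<in> {1..\<mu>}" "j \<noteq> i" using \<open>2 \<le> \<mu>\<close> \<open>i \<in> {1..\<mu>}\<close> by (auto simp: j_def)
  have "{(a, j)} \<subseteq> Vhat V \<mu>" using \<open>a \<in> V\<close> j by (simp add: Vhat_def)
  from greedy_guarantee_lower_bound[OF guarantee this]
  have "Phi V E p \<mu> 1 2 I {(a, j)} - real m * \<eta> \<le> Phi V E p \<mu> 1 2 I S"
    using \<open>0 < m\<close> by (simp add: zero_power)
  moreover have "1 \<le> Phi V E p \<mu> 1 2 I {(a, j)}"
    by (rule Phi_1_2_singleton_ge_1[OF \<open>finite V\<close> \<open>a \<in> V\<close> ai \<open>i \<in> {1..\<mu>}\<close> j])
  ultimately show ?thesis by linarith
qed

lemma greedy_guarantee_imp_Phi_bound: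
  fixes V :: "'v set" and I Sstar S :: "('v \<times> nat) set"
  assumes "finite V" and "I \<subseteq> Vhat V \<mu>" and "2 \<le> \<nu>" and "\<nu> \<le> \<mu>"
    and "0 < \<epsilon>" and \<epsilon>_small: "\<epsilon> < 1 - 1 / exp 1" and k: "2 * (real \<nu> - 1) / \<epsilon> \<le> real k"
    and "Sstar \<subseteq> Vhat V \<mu>" and "card Sstar = k"
    and guarantee: "greedy_guarantee (Phi V E p \<mu> 1 2 I) (Vhat V \<mu>)
                      (\<epsilon> / (exp 1 * real (k div (\<nu> - 1)))) (k div (\<nu> - 1)) S"
  shows "(1 - 1 / exp 1 - \<epsilon>) / real \<nu> * Phi V E p \<mu> 1 \<nu> I Sstar \<le> Phi V E p \<mu> 1 2 I S"
proof -
  define f where "f = Phi V E p \<mu> 1 2 I"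
  define Y where "Y = Phi V E p \<mu> 1 \<nu> I Sstar"
  have "0 < 1 / exp (1 :: real)" by simp
  then have "\<epsilon> < 1" using \<epsilon>_small by linarith
  note budget = \<open>2 \<le> \<nu>\<close> \<open>0 < \<epsilon>\<close> \<open>\<epsilon> < 1\<close> k
  have "0 < k div (\<nu> - 1)" using one_le_budget_div[OF budget] by simp
  then have error: "real (k div (\<nu> - 1)) * (\<epsilon> / (exp 1 * real (k div (\<nu> - 1)))) = \<epsilon> / exp 1" by simp
  (* The multiplicative slack pays for the additive loss \<epsilon>/e only when Y > \<nu>. *)
  show ?thesis
  proof (cases "real \<nu> < Y")
    case True
    have "(1 - 1 / exp 1) * (1 - \<epsilon>) / real \<nu> * f Sstar - \<epsilon> / exp 1 \<le> f S"
      using greedy_guarantee_budget_bound[OF budget guarantee[folded f_def] \<open>Sstar \<subseteq> Vhat V \<mu>\<close>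
          \<open>card Sstar = k\<close>] Phi_nonneg
      unfolding error f_def by blast
    moreover have "(1 - 1 / exp 1) * (1 - \<epsilon>) / real \<nu> * Y \<le> (1 - 1 / exp 1) * (1 - \<epsilon>) / real \<nu> * f Sstar"
      using Phi_le_Phi_1_2[OF \<open>finite V\<close> \<open>2 \<le> \<nu>\<close>] \<epsilon>_small \<open>\<epsilon> < 1\<close>
      by (intro mult_left_mono) (auto simp: f_def Y_def)
    moreover have "(1 - 1 / exp 1 - \<epsilon>) / real \<nu> * Y
        = (1 - 1 / exp 1) * (1 - \<epsilon>) / real \<nu> * Y - \<epsilon> / exp 1 * (Y / real \<nu>)"
      by (simp add: field_split_simps)
    moreover have "\<epsilon> / exp 1 \<le> \<epsilon> / exp 1 * (Y / real \<nu>)"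
      using True \<open>0 < \<epsilon>\<close> \<open>2 \<le> \<nu>\<close> by (simp add: field_simps)
    ultimately have "(1 - 1 / exp 1 - \<epsilon>) / real \<nu> * Y \<le> f S" by linarith
    then show ?thesis by (simp add: f_def Y_def)
  next
    case False
    show ?thesis
    proof (cases "I = {}")
      case True
      then show ?thesis by (simp add: Phi_no_seeds Phi_nonneg)
    next
      case False
      then have "1 - \<epsilon> / exp 1 \<le> f S"
        using greedy_guarantee_Phi_1_2_ge[OF \<open>finite V\<close> \<open>I \<subseteq> Vhat V \<mu>\<close> _ _ \<open>0 < k div (\<nu> - 1)\<close> guarantee]
          \<open>2 \<le> \<nu>\<close> \<open>\<nu> \<le> \<mu>\<close> unfolding error f_def by simp
      moreover have "(1 - 1 / exp 1 - \<epsilon>) / real \<nu> * Y \<le> (1 - 1 / exp 1 - \<epsilon>) / real \<nu> * real \<nu>"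
        using \<open>\<not> real \<nu> < Y\<close> \<epsilon>_small by (intro mult_left_mono) auto
      moreover have "(1 - 1 / exp 1 - \<epsilon>) / real \<nu> * real \<nu> = 1 - 1 / exp 1 - \<epsilon>"
        using \<open>2 \<le> \<nu>\<close> by simp
      moreover have "\<epsilon> / exp 1 \<le> \<epsilon>" using \<open>0 < \<epsilon>\<close> by (simp add: field_simps)
      ultimately have "(1 - 1 / exp 1 - \<epsilon>) / real \<nu> * Y \<le> f S" using \<open>0 < 1 / exp 1\<close> by linarith
      then show ?thesis by (simp add: f_def Y_def)
    qed
  qed
qed

lemma prob_greedyiter_first_guarantee:
  fixes V :: "'v set" and I :: "('v \<times> nat) set"
  assumes "finite V" and "V \<noteq> {}" and "1 \<le> \<mu>"
    and tb: "\<forall>C g. finite C \<and> C \<noteq> {} \<longrightarrow> tb C g \<in> C \<and> (\<forall>c\<in>C. g c \<le> g (tb C g))"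
    and "0 < \<epsilon>" and "0 < \<delta>" and "\<delta> < 1" and "2 \<le> \<nu>" and "1 \<le> k div (\<nu> - 1)"
  shows "1 - \<delta> / real \<nu> \<le> measure_pmf.prob (greedyiter_first V E p \<mu> tb \<epsilon> \<delta> I \<nu> k)
           {S. greedy_guarantee (Phi V E p \<mu> 1 2 I) (Vhat V \<mu>)
                 (\<epsilon> / (exp 1 * real (k div (\<nu> - 1)))) (k div (\<nu> - 1)) S}"
proof -
  have "\<delta> / real \<nu> \<le> 1 / 2" using \<open>\<delta> < 1\<close> \<open>2 \<le> \<nu>\<close> by (simp add: field_simps)
  then have "1 - \<delta> / real \<nu> \<le> measure_pmf.prob
      (greedy_pmf V E p \<mu> tb (\<lambda>S Xs. real (phi_real V \<mu> 1 2 I S Xs)) (\<epsilon> / 2) (\<delta> / real \<nu>) (k div (\<nu> - 1)))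
      {S. greedy_guarantee (Phi V E p \<mu> 1 2 I) (Vhat V \<mu>)
            (2 * (\<epsilon> / 2 / (exp 1 * real (k div (\<nu> - 1))))) (k div (\<nu> - 1)) S}"
    using assms by (intro prob_greedy_pmf_guarantee[OF _ _ tb _ _ Phi_1_2_mono Phi_1_2_marginal])
      (simp_all add: phi_real_le_card Phi_def)
  then show ?thesis by (simp add: greedyiter_first_def)
qed

theorem mainTheorem10:
  fixes V :: "'v set" and E :: "('v \<times> 'v) set" and p :: "nat \<Rightarrow> 'v \<times> 'v \<Rightarrow> real"
    and I :: "('v \<times> nat) set" and \<mu> \<nu> k :: nat and \<epsilon> \<delta> :: real
    and tb :: "('v \<times> nat) set \<Rightarrow> ('v \<times> nat \<Rightarrow> real) \<Rightarrow> 'v \<times> nat"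
    and Sstar :: "('v \<times> nat) set"
  assumes "finite V" and "E \<subseteq> V \<times> V"
    and "\<forall>i\<in>{1..\<mu>}. \<forall>e\<in>E. 0 \<le> p i e \<and> p i e \<le> 1"
    and "I \<subseteq> Vhat V \<mu>"
    and "2 \<le> \<nu>" and "\<nu> \<le> \<mu>" and "2 \<le> k" and "\<nu> \<le> k" and "k \<le> \<nu> * card V" and "\<mu> \<le> card V"
    and "0 < \<epsilon>" and "real k \<ge> 2 * (real \<nu> - 1) / \<epsilon>"
    and "0 < \<delta>" and "\<delta> < 1"
    and "\<forall>C g. finite C \<and> C \<noteq> {} \<longrightarrow> tb C g \<in> C \<and> (\<forall>c\<in>C. g c \<le> g (tb C g))"
    and "Sstar \<subseteq> Vhat V \<mu>" and "card Sstar = k"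
    and "\<forall>S. S \<subseteq> Vhat V \<mu> \<and> card S = k \<longrightarrow> Phi V E p \<mu> 1 \<nu> I S \<le> Phi V E p \<mu> 1 \<nu> I Sstar"
  shows "measure_pmf.prob (greedyiter_first V E p \<mu> tb \<epsilon> \<delta> I \<nu> k)
           {S. Phi V E p \<mu> 1 2 I S \<ge> (1 - 1 / exp 1 - \<epsilon>) / real \<nu> * Phi V E p \<mu> 1 \<nu> I Sstar}
         \<ge> 1 - \<delta> / real \<nu>"
proof -
  let ?Good = "{S. (1 - 1 / exp 1 - \<epsilon>) / real \<nu> * Phi V E p \<mu> 1 \<nu> I Sstar \<le> Phi V E p \<mu> 1 2 I S}"
  let ?P = "greedyiter_first V E p \<mu> tb \<epsilon> \<delta> I \<nu> k"
  show ?thesis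
  proof (cases "\<epsilon> < 1 - 1 / exp 1")
    case True
    have "0 < 1 / exp (1 :: real)" by simp
    then have "1 \<le> k div (\<nu> - 1)"
      using True by (intro one_le_budget_div[OF assms(5,11) _ assms(12)]) linarith
    moreover have "V \<noteq> {}" and "1 \<le> \<mu>" using assms(5,6,10) by auto
    ultimately have "1 - \<delta> / real \<nu> \<le> measure_pmf.prob ?P
        {S. greedy_guarantee (Phi V E p \<mu> 1 2 I) (Vhat V \<mu>)
              (\<epsilon> / (exp 1 * real (k div (\<nu> - 1)))) (k div (\<nu> - 1)) S}"
      using prob_greedyiter_first_guarantee[OF assms(1) _ _ assms(15,11,13,14,5)] by blast
    also have "\<dots> \<le> measure_pmf.prob ?P ?Good"
      using greedy_guarantee_imp_Phi_bound[OF assms(1,4,5,6,11) True assms(12,16,17)]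
      by (intro measure_pmf.finite_measure_mono) auto
    finally show ?thesis .
  next
    case False
    then have "(1 - 1 / exp 1 - \<epsilon>) / real \<nu> * Phi V E p \<mu> 1 \<nu> I Sstar \<le> 0"
      by (intro mult_nonpos_nonneg divide_nonpos_nonneg Phi_nonneg) auto
    then have "?Good = UNIV" by (auto intro: order_trans[OF _ Phi_nonneg])
    then show ?thesis using assms(5,13) by simp
  qed
qed

end
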